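(* Let $n,d\ge1$. Let $W=(w_{i,j})$, $\widetilde W=(\tilde w_{i,j})$ be real $n\times n$ matrices and $G,\widetilde G$ real $nd\times nd$ block matrices with $d\times d$ blocks $G_{i,j},\widetilde G_{i,j}$. Suppose there exist $f_1,\dots,f_n>0$ and $\varepsilon,\eta\ge0$ with $$\sup_{i\ne j}\Big|\frac{\tilde w_{i,j}}{f_i}-w_{i,j}\Big|\le\varepsilon,\qquad \sup_{i,j}\|\widetilde G_{i,j}-G_{i,j}\|_F\le\eta,$$ and that there is $C>0$ with $0\le w_{i,j}\le C$ for all $i,j$, $\sup_{i,j}\|G_{i,j}\|_F\le C$ and $\sup_{i,j}\|\widetilde G_{i,j}\|_F\le C$. If $\inf_i\frac1n\sum_{j\ne i}w_{i,j}>\gamma$ and $\gamma>\varepsilon$, then $$\|L_0(W,G)-L_0(\widetilde W,\widetilde G)\|_{op}\le \frac1\gamma C(\eta+\varepsilon)+\frac{\varepsilon}{\gamma(\gamma-\varepsilon)}C^2$$ and $$\|L(W,G)-L_0(\widetilde W,\widetilde G)\|_{op}\le \frac1\gamma C(\eta+\varepsilon)+\frac{\varepsilon}{\gamma(\gamma-\varepsilon)}C^2+\frac{C^2}{n\gamma}.$$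
   Context: For an $n\times n$ matrix $W=(w_{i,j})$ and an $nd\times nd$ block matrix $G$ with $d\times d$ blocks $G_{i,j}$, define $S$ as the block matrix with blocks $S_{i,j}=w_{i,j}G_{i,j}$ and $D$ as the block-diagonal matrix with diagonal blocks $D_{i,i}=\big(\sum_{j\ne i}w_{i,j}\big)\mathrm I_d$ (assumed invertible); $L(W,G):=D^{-1}S$. Further $L_0(W,G):=L(W\circ 1_{i\ne j},G)$, i.e. $L$ computed from the weight matrix obtained from $W$ by setting its diagonal entries to $0$. $\|\cdot\|_{op}$ is the largest singular value, $\|\cdot\|_F$ the Frobenius norm. *)

theory Defs
  imports "HOL-Analysis.Analysis"
begin

text \<open>An nd x nd block matrix is indexed by pairs (i,a) with i a block index
  (type 'n, n = CARD('n)) and a an index inside the block (type 'd, d = CARD('d)).\<close>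

definition block :: "real^('n::finite \<times> 'd::finite)^('n \<times> 'd) \<Rightarrow> 'n \<Rightarrow> 'n \<Rightarrow> real^'d^'d" where
  "block G i j = (\<chi> a b. G $ (i, a) $ (j, b))"

definition Smat :: "real^'n^'n \<Rightarrow> real^('n::finite \<times> 'd::finite)^('n \<times> 'd) \<Rightarrow> real^('n \<times> 'd)^('n \<times> 'd)" where
  "Smat W G = (\<chi> p q. W $ fst p $ fst q * G $ p $ q)"

definition Dmat :: "real^'n^'n \<Rightarrow> real^('n::finite \<times> 'd::finite)^('n \<times> 'd)" where
  "Dmat W = (\<chi> p q. if p = q then (\<Sum>j\<in>UNIV - {fst p}. W $ fst p $ j) else 0)"

definition Lmat :: "real^'n^'n \<Rightarrow> real^('n::finite \<times> 'd::finite)^('n \<times> 'd) \<Rightarrow> real^('n \<times> 'd)^('n \<times> 'd)" where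
  "Lmat W G = matrix_inv (Dmat W) ** Smat W G"

definition offdiag :: "real^'n^'n \<Rightarrow> real^'n^'n" where
  "offdiag W = (\<chi> i j. if i = j then 0 else W $ i $ j)"

definition L0mat :: "real^'n^'n \<Rightarrow> real^('n::finite \<times> 'd::finite)^('n \<times> 'd) \<Rightarrow> real^('n \<times> 'd)^('n \<times> 'd)" where
  "L0mat W G = Lmat (offdiag W) G"

definition opnorm :: "real^'m::finite^'k::finite \<Rightarrow> real" where
  "opnorm A = onorm (\<lambda>x. A *v x)"

end

theory Submission
  imports Defs
begin

text \<open>Block (i, j) of L0(W, G) - L0(W', G') is (w_ij / D_i) G_ij - (a_ij / A_i) G'_ij, where w is
  the off-diagonal part of W, a_ij = w'_ij / f_i and D_i, A_i are the row sums of w and a: the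
  factor f_i cancels in the normalisation. The operator norm is bounded by the Frobenius norm, so
  it suffices to bound the l2 norm of every block row by B / sqrt n, B being the claimed bound.
  Now |A_i - D_i| <= n eps and A_i D_i >= n^2 gamma (gamma - eps). Writing the block as
  (w G - a G') / D + (1/D - 1/A) a G' when A <= D, and as (w G - a G') / A + (1/D - 1/A) w G when
  A > D, the first summand gives the term C (eta + eps) / gamma of B and the second the term
  eps C^2 / (gamma (gamma - eps)). Finally L(W, G) - L0(W, G) is block diagonal with blocks
  (W_ii / D_i) G_ii of norm at most C^2 / (n gamma).\<close>

section \<open>Frobenius and operator norms of block matrices\<close>

lemma sum_UNIV_pair:
  "(\<Sum>p\<in>(UNIV::('a::finite \<times> 'b::finite) set). h p) = (\<Sum>i\<in>UNIV. \<Sum>a\<in>UNIV. h (i, a))"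
  by (simp add: sum.cartesian_product flip: UNIV_Times_UNIV)

lemma power2_norm_vec: "(norm (x :: 'a::real_normed_vector^'k::finite))\<^sup>2 = (\<Sum>k\<in>UNIV. (norm (x $ k))\<^sup>2)"
  by (simp add: norm_vec_def L2_set_def sum_nonneg)

lemma norm_matrix_vector_mult_le: "norm (M *v x) \<le> norm M * norm (x :: real^'m::finite)"
proof -
  have "norm (M *v x) = L2_set (\<lambda>k. \<bar>inner (M $ k) x\<bar>) UNIV"
    by (simp add: norm_vec_def matrix_vector_mul_component)
  also have "\<dots> \<le> L2_set (\<lambda>k. norm (M $ k) * norm x) UNIV"
    by (rule L2_set_mono) (simp_all add: Cauchy_Schwarz_ineq2)
  also have "\<dots> = norm M * norm x"
    by (simp add: L2_set_left_distrib norm_vec_def)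
  finally show ?thesis .
qed

lemma opnorm_le_norm: "opnorm M \<le> norm M"
  unfolding opnorm_def by (rule onorm_le) (rule norm_matrix_vector_mult_le)

lemma opnorm_add_le: "opnorm (A + B) \<le> opnorm A + opnorm B"
  unfolding opnorm_def matrix_vector_mult_add_rdistrib
  by (rule onorm_triangle) simp_all

lemma power2_norm_vec_pair:
  "(norm (x :: 'a::real_normed_vector^('n::finite \<times> 'd::finite)))\<^sup>2 = (\<Sum>i\<in>UNIV. (norm (\<chi> a. x $ (i, a)))\<^sup>2)"
  by (simp add: power2_norm_vec sum_UNIV_pair)

lemma power2_norm_blocks:
  fixes M :: "real^('n::finite \<times> 'd::finite)^('n \<times> 'd)"
  shows "(norm M)\<^sup>2 = (\<Sum>i\<in>UNIV. \<Sum>j\<in>UNIV. (norm (block M i j))\<^sup>2)"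
proof -
  have "(norm M)\<^sup>2 = (\<Sum>i\<in>UNIV. \<Sum>a\<in>UNIV. \<Sum>j\<in>UNIV. \<Sum>b\<in>UNIV. (M $ (i, a) $ (j, b))\<^sup>2)"
    by (simp add: power2_norm_vec sum_UNIV_pair)
  also have "\<dots> = (\<Sum>i\<in>UNIV. \<Sum>j\<in>UNIV. \<Sum>a\<in>UNIV. \<Sum>b\<in>UNIV. (M $ (i, a) $ (j, b))\<^sup>2)"
    by (rule sum.cong[OF refl], rule sum.swap)
  finally show ?thesis
    by (simp add: power2_norm_vec block_def)
qed

lemma norm_le_of_block_rows:
  fixes M :: "real^('n::finite \<times> 'd::finite)^('n \<times> 'd)"
  assumes rows: "\<And>i. L2_set (\<lambda>j. norm (block M i j)) UNIV \<le> B / sqrt CARD('n)"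
  shows "norm M \<le> B"
proof -
  have "0 \<le> B / sqrt CARD('n)"
    using rows[of undefined] L2_set_nonneg order_trans by blast
  then have B_nonneg: "0 \<le> B"
    by (simp add: zero_le_divide_iff)
  have "(L2_set (\<lambda>j. norm (block M i j)) UNIV)\<^sup>2 = (\<Sum>j\<in>UNIV. (norm (block M i j))\<^sup>2)" for i
    by (simp add: L2_set_def sum_nonneg)
  then have "norm M = L2_set (\<lambda>i. L2_set (\<lambda>j. norm (block M i j)) UNIV) UNIV"
    by (simp add: L2_set_def flip: power2_norm_blocks)
  also have "\<dots> \<le> L2_set (\<lambda>i::'n. B / sqrt CARD('n)) UNIV"
    using rows by (intro L2_set_mono) simp_all
  also have "\<dots> = B"
    using B_nonneg by (simp add: L2_set_constant)
  finally show ?thesis .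
qed

lemma opnorm_block_diagonal_le:
  fixes M :: "real^('n::finite \<times> 'd::finite)^('n \<times> 'd)"
  assumes off_diagonal: "\<And>i j. i \<noteq> j \<Longrightarrow> block M i j = 0"
    and diagonal: "\<And>i. norm (block M i i) \<le> \<beta>"
  shows "opnorm M \<le> \<beta>"
  unfolding opnorm_def
proof (rule onorm_le)
  fix x :: "real^('n \<times> 'd)"
  define xs where "xs i = (\<chi> a. x $ (i, a))" for i
  have "M $ (i, a) $ (j, b) = 0" if "j \<noteq> i" for i j a b
    using off_diagonal[OF that[symmetric]] by (simp add: block_def vec_eq_iff)
  then have "(M *v x) $ (i, a) = (\<Sum>b\<in>UNIV. M $ (i, a) $ (i, b) * x $ (i, b))" for i a
    by (simp add: matrix_vector_mult_def sum_UNIV_pair sum.remove[of UNIV i])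
  then have "(M *v x) $ (i, a) = (block M i i *v xs i) $ a" for i a
    by (simp add: matrix_vector_mult_def block_def xs_def)
  then have "(norm (M *v x))\<^sup>2 = (\<Sum>i\<in>UNIV. (norm (block M i i *v xs i))\<^sup>2)"
    by (simp add: power2_norm_vec_pair)
  also have "\<dots> \<le> (\<Sum>i\<in>UNIV. (\<beta> * norm (xs i))\<^sup>2)"
  proof (intro sum_mono power_mono)
    show "norm (block M i i *v xs i) \<le> \<beta> * norm (xs i)" for i
      using norm_matrix_vector_mult_le diagonal mult_right_mono norm_ge_zero order_trans by metis
  qed simp
  also have "\<dots> = (\<beta> * norm x)\<^sup>2"
    by (simp add: power2_norm_vec_pair power_mult_distrib sum_distrib_left xs_def)
  finally show "norm (M *v x) \<le> \<beta> * norm x"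
    using diagonal order_trans norm_ge_zero by (metis power2_le_imp_le mult_nonneg_nonneg)
qed

section \<open>Blocks of the normalised matrices\<close>

definition deg :: "real^'n::finite^'n \<Rightarrow> 'n \<Rightarrow> real" where
  "deg W i = (\<Sum>j\<in>UNIV - {i}. W $ i $ j)"

lemma deg_eq_sum_offdiag: "deg W i = (\<Sum>j\<in>UNIV. offdiag W $ i $ j)"
  by (simp add: deg_def offdiag_def sum.remove[of UNIV i])

lemma deg_offdiag [simp]: "deg (offdiag W) = deg W"
  unfolding fun_eq_iff deg_def offdiag_def by (auto intro: sum.cong)

lemma matrix_inv_unique:
  fixes A B :: "'a::semiring_1^'n::finite^'n"
  assumes "A ** B = mat 1" "B ** A = mat 1"
  shows "matrix_inv A = B"
proof -
  have "A ** matrix_inv A = mat 1 \<and> matrix_inv A ** A = mat 1"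
    unfolding matrix_inv_def by (rule someI[of _ B]) (use assms in auto)
  then show ?thesis
    by (metis assms(1) matrix_mul_assoc matrix_mul_lid matrix_mul_rid)
qed

lemma diagonal_matrix_mult:
  fixes d :: "'n::finite \<Rightarrow> 'a::semiring_1"
  shows "(\<chi> p q. if p = q then d p else 0) ** M = (\<chi> p q. d p * M $ p $ q)"
  by (simp add: vec_eq_iff matrix_matrix_mult_def if_distrib[where f="\<lambda>x. x * _ y" for y]
      cong: if_cong)

lemma matrix_inv_diagonal:
  fixes d :: "'n::finite \<Rightarrow> 'a::field"
  assumes "\<And>p. d p \<noteq> 0"
  shows "matrix_inv (\<chi> p q. if p = q then d p else 0) = (\<chi> p q. if p = q then 1 / d p else 0)"
  by (rule matrix_inv_unique) (simp_all add: diagonal_matrix_mult mat_def vec_eq_iff assms)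

lemma block_Lmat:
  fixes W :: "real^'n::finite^'n" and G :: "real^('n \<times> 'd::finite)^('n \<times> 'd)"
  assumes "\<And>i. deg W i \<noteq> 0"
  shows "block (Lmat W G) i j = (W $ i $ j / deg W i) *\<^sub>R block G i j"
proof -
  have "(Dmat W :: real^('n \<times> 'd)^_) = (\<chi> p q. if p = q then deg W (fst p) else 0)"
    by (simp add: Dmat_def deg_def vec_eq_iff)
  then have "matrix_inv (Dmat W :: real^('n \<times> 'd)^_) = (\<chi> p q. if p = q then 1 / deg W (fst p) else 0)"
    by (simp add: matrix_inv_diagonal assms)
  then have "Lmat W G = (\<chi> p q. W $ fst p $ fst q * G $ p $ q / deg W (fst p))"
    by (simp add: Lmat_def Smat_def diagonal_matrix_mult)
  then show ?thesis
    by (simp add: block_def vec_eq_iff)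
qed

lemma block_L0mat:
  assumes "\<And>i. deg W i \<noteq> 0"
  shows "block (L0mat W G) i j = (offdiag W $ i $ j / deg W i) *\<^sub>R block G i j"
  using block_Lmat[of "offdiag W"] assms by (simp add: L0mat_def)

lemma block_diff: "block (A - B) i j = block A i j - block B i j"
  by (simp add: block_def vec_eq_iff)

section \<open>Perturbation of a single normalised block row\<close>

lemma L2_set_norm_add_le:
  "L2_set (\<lambda>j. norm (f j + g j)) A \<le> L2_set (\<lambda>j. norm (f j)) A + L2_set (\<lambda>j. norm (g j)) A"
  by (rule order_trans[OF L2_set_mono L2_set_triangle_ineq]) (simp_all add: norm_triangle_ineq)

lemma power2_le_chord:
  fixes a w C e :: real
  assumes "0 \<le> w" "w \<le> C" "\<bar>a - w\<bar> \<le> e"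
  shows "a\<^sup>2 \<le> 2 * C * a - (C + 2 * e) * w + e\<^sup>2 + 2 * C * e"
proof -
  define d where "d = a - w"
  have "2 * C * a - (C + 2 * e) * w + e\<^sup>2 + 2 * C * e - a\<^sup>2
          = w * (C - w) + (e + d) * (2 * C - 2 * w + e - d)"
    by (simp add: d_def algebra_simps power2_eq_square)
  moreover have "0 \<le> w * (C - w)"
    using assms by simp
  moreover have "0 \<le> (e + d) * (2 * C - 2 * w + e - d)"
    using assms unfolding d_def by (intro mult_nonneg_nonneg) (auto simp: abs_le_iff)
  ultimately show ?thesis
    by linarith
qed

lemma cube_deficit_le:
  fixes x r :: real
  assumes "0 \<le> r" "r \<le> x"
  shows "(x + 2 * r) * (x - r)\<^sup>2 \<le> x ^ 3"
proof -
  have "x ^ 3 - (x + 2 * r) * (x - r)\<^sup>2 = r\<^sup>2 * (3 * x - 2 * r)"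
    by (simp add: power2_eq_square power3_eq_cube algebra_simps)
  moreover have "0 \<le> r\<^sup>2 * (3 * x - 2 * r)"
    using assms by simp
  ultimately show ?thesis
    by linarith
qed

lemma sqrt_mult_divide: "0 < x \<Longrightarrow> sqrt x * (c / (x * y)) = c / (sqrt x * y)"
  by (cases "y = 0") (auto simp: field_simps)

text \<open>One block row i of the main argument: w and a are row i of the off-diagonal parts of W
  and of W' scaled by 1 / f i, and g, h are the blocks of G and G' in that row.\<close>

locale row_perturbation =
  fixes J :: "'j set" and w a :: "'j \<Rightarrow> real" and g h :: "'j \<Rightarrow> 'v::real_normed_vector"
    and C \<epsilon> \<eta> \<gamma> :: real
  assumes finite_J: "finite J"
    and w_nonneg: "\<And>j. j \<in> J \<Longrightarrow> 0 \<le> w j" and w_le: "\<And>j. j \<in> J \<Longrightarrow> w j \<le> C"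
    and a_close: "\<And>j. j \<in> J \<Longrightarrow> \<bar>a j - w j\<bar> \<le> \<epsilon>"
    and h_close: "\<And>j. j \<in> J \<Longrightarrow> norm (h j - g j) \<le> \<eta>"
    and g_le: "\<And>j. j \<in> J \<Longrightarrow> norm (g j) \<le> C" and h_le: "\<And>j. j \<in> J \<Longrightarrow> norm (h j) \<le> C"
    and eps_nonneg: "0 \<le> \<epsilon>" and eps_less: "\<epsilon> < \<gamma>"
    and sum_w_gt: "real (card J) * \<gamma> < sum w J"
begin

abbreviation "n \<equiv> real (card J)"
abbreviation "D \<equiv> sum w J"
abbreviation "A \<equiv> sum a J"

lemma J_nonempty: "J \<noteq> {}"
  using sum_w_gt by auto

lemma n_ge_1: "1 \<le> n"
  using finite_J J_nonempty by (simp add: Suc_le_eq card_gt_0_iff)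

lemma gamma_pos: "0 < \<gamma>"
  using eps_nonneg eps_less by linarith

lemma D_le: "D \<le> n * C"
  using sum_bounded_above[of J w C] w_le by simp

lemma eps_less_C: "\<epsilon> < C"
  using sum_w_gt D_le n_ge_1 eps_less by (smt (verit) mult_left_mono)

lemma sum_diff_le: "A - D \<le> n * \<epsilon>" "D - A \<le> n * \<epsilon>"
  using sum_bounded_above[of J "\<lambda>j. a j - w j" \<epsilon>] sum_bounded_above[of J "\<lambda>j. w j - a j" \<epsilon>]
    a_close by (auto simp: sum_subtractf abs_le_iff)

lemma n_eps_less_D: "n * \<epsilon> < D"
  using sum_w_gt eps_less n_ge_1 by (smt (verit) mult_left_mono)

lemma A_mul_D_ge: "n\<^sup>2 * (\<gamma> * (\<gamma> - \<epsilon>)) \<le> A * D"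
proof -
  have "n * (\<gamma> - \<epsilon>) \<le> D - n * \<epsilon>"
    using sum_w_gt by (simp add: algebra_simps)
  also have "\<dots> \<le> A"
    using sum_diff_le by linarith
  moreover have "0 \<le> n * (\<gamma> - \<epsilon>)"
    using eps_less n_ge_1 by simp
  ultimately have "(n * (\<gamma> - \<epsilon>)) * (n * \<gamma>) \<le> A * D"
    using sum_w_gt gamma_pos by (intro mult_mono) auto
  then show ?thesis
    by (simp add: power2_eq_square algebra_simps)
qed

lemma A_pos: "0 < A" and D_pos: "0 < D"
  using n_eps_less_D sum_diff_le eps_nonneg n_ge_1 by (smt (verit) mult_nonneg_nonneg)+

lemma C_nonneg: "0 \<le> C"
  using J_nonempty w_nonneg w_le by force

lemma C_eta_eps_nonneg: "0 \<le> C * (\<eta> + \<epsilon>)"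
  using J_nonempty h_close eps_nonneg C_nonneg
  by (smt (verit, best) all_not_in_conv mult_nonneg_nonneg norm_ge_zero)

lemma norm_pair_diff_le:
  assumes "j \<in> J"
  shows "norm (w j *\<^sub>R g j - a j *\<^sub>R h j) \<le> C * (\<eta> + \<epsilon>)"
proof -
  have "norm (w j *\<^sub>R g j - a j *\<^sub>R h j) = norm (w j *\<^sub>R (g j - h j) + (w j - a j) *\<^sub>R h j)"
    by (simp add: algebra_simps)
  also have "\<dots> \<le> \<bar>w j\<bar> * norm (h j - g j) + \<bar>a j - w j\<bar> * norm (h j)"
    by (metis norm_triangle_ineq norm_scaleR norm_minus_commute abs_minus_commute)
  also have "\<dots> \<le> C * \<eta> + \<epsilon> * C"
    using assms w_nonneg w_le h_close a_close h_le C_nonneg eps_nonneg by (intro add_mono mult_mono) auto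
  finally show ?thesis
    by (simp add: algebra_simps)
qed

lemma L2_set_scaled_pair_diff_le:
  assumes "D \<le> X"
  shows "L2_set (\<lambda>j. norm ((1 / X) *\<^sub>R (w j *\<^sub>R g j - a j *\<^sub>R h j))) J
           \<le> C * (\<eta> + \<epsilon>) / (sqrt n * \<gamma>)"
proof -
  have X_pos: "0 < X"
    using assms D_pos by linarith
  have "L2_set (\<lambda>j. norm ((1 / X) *\<^sub>R (w j *\<^sub>R g j - a j *\<^sub>R h j))) J
          \<le> L2_set (\<lambda>j. C * (\<eta> + \<epsilon>) / X) J"
    using norm_pair_diff_le X_pos by (intro L2_set_mono) (simp_all add: divide_right_mono)
  also have "\<dots> = sqrt n * (C * (\<eta> + \<epsilon>)) / X"
    using X_pos C_eta_eps_nonneg by (simp add: L2_set_constant)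
  also have "\<dots> \<le> C * (\<eta> + \<epsilon>) / (sqrt n * \<gamma>)"
  proof -
    have "sqrt n * (sqrt n * \<gamma>) \<le> X"
      using sum_w_gt assms n_ge_1 by (simp add: mult.assoc[symmetric])
    then have "sqrt n / X \<le> 1 / (sqrt n * \<gamma>)"
      using X_pos gamma_pos n_ge_1 by (simp add: divide_simps mult.commute)
    from mult_left_mono[OF this C_eta_eps_nonneg] show ?thesis
      by (simp add: mult.commute)
  qed
  finally show ?thesis .
qed

lemma sum_power2_le: "(\<Sum>j\<in>J. (a j)\<^sup>2) \<le> n * C\<^sup>2 + 2 * C * (n * \<epsilon> - (D - A))"
proof -
  have "(\<Sum>j\<in>J. (a j)\<^sup>2) \<le> (\<Sum>j\<in>J. 2 * C * a j - (C + 2 * \<epsilon>) * w j + \<epsilon>\<^sup>2 + 2 * C * \<epsilon>)"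
    using w_nonneg w_le a_close by (intro sum_mono power2_le_chord)
  also have "\<dots> = 2 * C * A - (C + 2 * \<epsilon>) * D + n * (\<epsilon>\<^sup>2 + 2 * C * \<epsilon>)"
    by (simp add: sum.distrib sum_subtractf sum_distrib_left sum_distrib_right algebra_simps)
  also have "\<dots> \<le> n * C\<^sup>2 + 2 * C * (n * \<epsilon> - (D - A))"
  proof -
    have "C * D \<le> n * C\<^sup>2"
      using mult_left_mono[OF D_le C_nonneg] by (simp add: power2_eq_square mult.left_commute)
    moreover have "\<epsilon> * (n * \<epsilon>) \<le> \<epsilon> * D"
      using n_eps_less_D eps_nonneg by (intro mult_left_mono) auto
    moreover have "0 \<le> \<epsilon> * D"
      using eps_nonneg D_pos by simp
    moreover have "n * C\<^sup>2 + 2 * C * (n * \<epsilon> - (D - A)) - (2 * C * A - (C + 2 * \<epsilon>) * D + n * (\<epsilon>\<^sup>2 + 2 * C * \<epsilon>))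
        = (n * C\<^sup>2 - C * D) + (\<epsilon> * D - \<epsilon> * (n * \<epsilon>)) + \<epsilon> * D"
      by (simp add: power2_eq_square algebra_simps)
    ultimately show ?thesis
      by linarith
  qed
  finally show ?thesis .
qed

text \<open>The crude bound a j <= C + eps would only give the constant C + eps instead of C here;
  the chord bound behind the previous lemma shows that a large deficit D - A forces the a j
  to lie well below C.\<close>

lemma sum_power2_mul_deficit_le:
  assumes "A \<le> D"
  shows "(\<Sum>j\<in>J. (a j)\<^sup>2) * (D - A)\<^sup>2 \<le> C\<^sup>2 * n ^ 3 * \<epsilon>\<^sup>2"
proof -
  define S where "S = (\<Sum>j\<in>J. (a j)\<^sup>2)"
  define r where "r = n * \<epsilon> - (D - A)"
  have r_nonneg: "0 \<le> r" and r_le: "r \<le> n * \<epsilon>"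
    using assms sum_diff_le by (auto simp: r_def)
  have S_le: "S \<le> n * C\<^sup>2 + 2 * C * r"
    using sum_power2_le by (simp add: S_def r_def)
  show ?thesis
  proof (cases "\<epsilon> = 0")
    case True
    then show ?thesis
      using r_nonneg assms by (simp add: r_def)
  next
    case False
    then have eps_pos: "0 < \<epsilon>"
      using eps_nonneg by simp
    have "\<epsilon> * (S * (D - A)\<^sup>2) \<le> \<epsilon> * ((n * C\<^sup>2 + 2 * C * r) * (D - A)\<^sup>2)"
      using S_le eps_nonneg by (intro mult_left_mono mult_right_mono) auto
    also have "\<dots> \<le> C\<^sup>2 * ((n * \<epsilon> + 2 * r) * (D - A)\<^sup>2)"
    proof -
      have "(C * r) * \<epsilon> \<le> (C * r) * C"
        using eps_less_C C_nonneg r_nonneg by (intro mult_left_mono) auto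
      then have "\<epsilon> * (n * C\<^sup>2 + 2 * C * r) \<le> C\<^sup>2 * (n * \<epsilon> + 2 * r)"
        by (simp add: algebra_simps power2_eq_square)
      from mult_right_mono[OF this zero_le_power2[of "D - A"]] show ?thesis
        by (simp add: mult.assoc)
    qed
    also have "\<dots> \<le> C\<^sup>2 * (n * \<epsilon>) ^ 3"
      using cube_deficit_le[OF r_nonneg r_le] by (simp add: r_def mult_left_mono)
    also have "\<dots> = \<epsilon> * (C\<^sup>2 * n ^ 3 * \<epsilon>\<^sup>2)"
      by (simp add: power3_eq_cube power2_eq_square)
    finally show ?thesis
      using eps_pos by (simp add: S_def)
  qed
qed

lemma sqrt_sum_power2_mul_deficit_le:
  assumes "A \<le> D"
  shows "sqrt (\<Sum>j\<in>J. (a j)\<^sup>2) * ((D - A) / (A * D)) \<le> C * \<epsilon> / (sqrt n * \<gamma> * (\<gamma> - \<epsilon>))"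
proof -
  define S where "S = (\<Sum>j\<in>J. (a j)\<^sup>2)"
  have "(sqrt S * (D - A))\<^sup>2 = S * (D - A)\<^sup>2"
    by (simp add: power_mult_distrib S_def sum_nonneg)
  also have "\<dots> \<le> C\<^sup>2 * n ^ 3 * \<epsilon>\<^sup>2"
    unfolding S_def by (rule sum_power2_mul_deficit_le[OF assms])
  also have "\<dots> = (C * \<epsilon> * n * sqrt n)\<^sup>2"
    by (simp add: power_mult_distrib power3_eq_cube power2_eq_square)
  finally have numerator_le: "sqrt S * (D - A) \<le> C * \<epsilon> * n * sqrt n"
    by (rule power2_le_imp_le) (simp add: C_nonneg eps_nonneg)
  have "sqrt S * (D - A) / (A * D) \<le> (C * \<epsilon> * n * sqrt n) / (n\<^sup>2 * (\<gamma> * (\<gamma> - \<epsilon>)))"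
    by (rule frac_le[OF _ numerator_le])
       (use A_mul_D_ge C_nonneg eps_nonneg n_ge_1 gamma_pos eps_less in auto)
  also have "\<dots> = (C * \<epsilon>) * (n * sqrt n) / ((sqrt n * \<gamma> * (\<gamma> - \<epsilon>)) * (n * sqrt n))"
    by (simp add: power2_eq_square algebra_simps)
  also have "\<dots> = C * \<epsilon> / (sqrt n * \<gamma> * (\<gamma> - \<epsilon>))"
    using n_ge_1 by simp
  finally show ?thesis
    by (simp add: S_def)
qed

lemma L2_set_row_error_deficit:
  assumes "A \<le> D"
  shows "L2_set (\<lambda>j. norm ((w j / D) *\<^sub>R g j - (a j / A) *\<^sub>R h j)) J
           \<le> C * (\<eta> + \<epsilon>) / (sqrt n * \<gamma>) + C\<^sup>2 * \<epsilon> / (sqrt n * \<gamma> * (\<gamma> - \<epsilon>))"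
proof -
  have coeff_nonneg: "0 \<le> 1 / A - 1 / D"
    using assms A_pos D_pos by (simp add: divide_simps)
  have "(w j / D) *\<^sub>R g j - (a j / A) *\<^sub>R h j
          = (1 / D) *\<^sub>R (w j *\<^sub>R g j - a j *\<^sub>R h j) + ((1 / D - 1 / A) * a j) *\<^sub>R h j" for j
    by (simp add: algebra_simps divide_inverse)
  then have "L2_set (\<lambda>j. norm ((w j / D) *\<^sub>R g j - (a j / A) *\<^sub>R h j)) J
      \<le> L2_set (\<lambda>j. norm ((1 / D) *\<^sub>R (w j *\<^sub>R g j - a j *\<^sub>R h j))) J
        + L2_set (\<lambda>j. norm (((1 / D - 1 / A) * a j) *\<^sub>R h j)) J"
    by (simp only: L2_set_norm_add_le)
  also have "L2_set (\<lambda>j. norm ((1 / D) *\<^sub>R (w j *\<^sub>R g j - a j *\<^sub>R h j))) J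
      \<le> C * (\<eta> + \<epsilon>) / (sqrt n * \<gamma>)"
    by (rule L2_set_scaled_pair_diff_le) simp
  also have "L2_set (\<lambda>j. norm (((1 / D - 1 / A) * a j) *\<^sub>R h j)) J
      \<le> L2_set (\<lambda>j. ((1 / A - 1 / D) * C) * \<bar>a j\<bar>) J"
  proof (rule L2_set_mono)
    fix j
    assume "j \<in> J"
    have "norm (((1 / D - 1 / A) * a j) *\<^sub>R h j) = (1 / A - 1 / D) * \<bar>a j\<bar> * norm (h j)"
      using coeff_nonneg by (simp add: abs_mult abs_minus_commute[of "1 / D"])
    also have "\<dots> \<le> (1 / A - 1 / D) * \<bar>a j\<bar> * C"
      using h_le[OF \<open>j \<in> J\<close>] coeff_nonneg by (intro mult_left_mono) auto
    finally show "norm (((1 / D - 1 / A) * a j) *\<^sub>R h j) \<le> ((1 / A - 1 / D) * C) * \<bar>a j\<bar>"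
      by (simp add: mult_ac)
  qed simp
  also have "\<dots> = (1 / A - 1 / D) * C * L2_set (\<lambda>j. \<bar>a j\<bar>) J"
    using coeff_nonneg C_nonneg by (simp add: L2_set_right_distrib)
  also have "\<dots> = C * (sqrt (\<Sum>j\<in>J. (a j)\<^sup>2) * ((D - A) / (A * D)))"
    using A_pos D_pos by (simp add: L2_set_def divide_simps)
  also have "\<dots> \<le> C * (C * \<epsilon> / (sqrt n * \<gamma> * (\<gamma> - \<epsilon>)))"
    by (rule mult_left_mono[OF sqrt_sum_power2_mul_deficit_le[OF assms] C_nonneg])
  finally show ?thesis
    by (simp add: power2_eq_square)
qed

lemma L2_set_row_error_excess:
  assumes "D < A"
  shows "L2_set (\<lambda>j. norm ((w j / D) *\<^sub>R g j - (a j / A) *\<^sub>R h j)) J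
           \<le> C * (\<eta> + \<epsilon>) / (sqrt n * \<gamma>) + C\<^sup>2 * \<epsilon> / (sqrt n * \<gamma> * (\<gamma> - \<epsilon>))"
proof -
  have coeff_nonneg: "0 \<le> 1 / D - 1 / A"
    using assms A_pos D_pos by (simp add: divide_simps)
  have "(w j / D) *\<^sub>R g j - (a j / A) *\<^sub>R h j
          = (1 / A) *\<^sub>R (w j *\<^sub>R g j - a j *\<^sub>R h j) + ((1 / D - 1 / A) * w j) *\<^sub>R g j" for j
    by (simp add: algebra_simps divide_inverse)
  then have "L2_set (\<lambda>j. norm ((w j / D) *\<^sub>R g j - (a j / A) *\<^sub>R h j)) J
      \<le> L2_set (\<lambda>j. norm ((1 / A) *\<^sub>R (w j *\<^sub>R g j - a j *\<^sub>R h j))) J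
        + L2_set (\<lambda>j. norm (((1 / D - 1 / A) * w j) *\<^sub>R g j)) J"
    by (simp only: L2_set_norm_add_le)
  also have "L2_set (\<lambda>j. norm ((1 / A) *\<^sub>R (w j *\<^sub>R g j - a j *\<^sub>R h j))) J
      \<le> C * (\<eta> + \<epsilon>) / (sqrt n * \<gamma>)"
    by (rule L2_set_scaled_pair_diff_le) (use assms in simp)
  also have "L2_set (\<lambda>j. norm (((1 / D - 1 / A) * w j) *\<^sub>R g j)) J
      \<le> L2_set (\<lambda>j. (1 / D - 1 / A) * C * C) J"
    using coeff_nonneg w_nonneg w_le g_le C_nonneg
    by (intro L2_set_mono) (simp_all add: abs_mult mult_mono)
  also have "\<dots> = C\<^sup>2 * (sqrt n * ((A - D) / (A * D)))"
    using coeff_nonneg C_nonneg A_pos D_pos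
    by (simp add: L2_set_constant power2_eq_square divide_simps)
  also have "\<dots> \<le> C\<^sup>2 * (\<epsilon> / (sqrt n * \<gamma> * (\<gamma> - \<epsilon>)))"
  proof -
    have "(A - D) / (A * D) \<le> n * \<epsilon> / (n\<^sup>2 * (\<gamma> * (\<gamma> - \<epsilon>)))"
      by (rule frac_le[OF _ sum_diff_le(1)])
         (use A_mul_D_ge eps_nonneg n_ge_1 gamma_pos eps_less in auto)
    also have "\<dots> = \<epsilon> / (n * (\<gamma> * (\<gamma> - \<epsilon>)))"
      using n_ge_1 by (simp add: power2_eq_square)
    finally have "sqrt n * ((A - D) / (A * D)) \<le> sqrt n * (\<epsilon> / (n * (\<gamma> * (\<gamma> - \<epsilon>))))"
      by (rule mult_left_mono) simp
    also have "\<dots> = \<epsilon> / (sqrt n * (\<gamma> * (\<gamma> - \<epsilon>)))"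
      by (rule sqrt_mult_divide) (use n_ge_1 in simp)
    finally have "sqrt n * ((A - D) / (A * D)) \<le> \<epsilon> / (sqrt n * (\<gamma> * (\<gamma> - \<epsilon>)))" .
    from mult_left_mono[OF this zero_le_power2[of C]] show ?thesis
      by (simp only: mult.assoc)
  qed
  finally show ?thesis
    by (simp add: mult_ac)
qed

lemma L2_set_row_error_le:
  "L2_set (\<lambda>j. norm ((w j / D) *\<^sub>R g j - (a j / A) *\<^sub>R h j)) J
     \<le> (1 / \<gamma> * C * (\<eta> + \<epsilon>) + \<epsilon> / (\<gamma> * (\<gamma> - \<epsilon>)) * C\<^sup>2) / sqrt n"
proof -
  have "C * (\<eta> + \<epsilon>) / (sqrt n * \<gamma>) + C\<^sup>2 * \<epsilon> / (sqrt n * \<gamma> * (\<gamma> - \<epsilon>))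
      = (1 / \<gamma> * C * (\<eta> + \<epsilon>) + \<epsilon> / (\<gamma> * (\<gamma> - \<epsilon>)) * C\<^sup>2) / sqrt n"
    by (simp add: add_divide_distrib divide_divide_eq_left mult_ac)
  then show ?thesis
    using L2_set_row_error_deficit L2_set_row_error_excess by (cases "A \<le> D") auto
qed

end

lemma opnorm_L0mat_diff_le:
  fixes W Wt :: "real^'n::finite^'n" and G Gt :: "real^('n \<times> 'd::finite)^('n \<times> 'd)"
    and f :: "'n \<Rightarrow> real"
  assumes f_pos: "\<And>i. 0 < f i"
    and eps_nonneg: "0 \<le> \<epsilon>" and eps_less: "\<epsilon> < \<gamma>"
    and W_close: "\<And>i j. i \<noteq> j \<Longrightarrow> \<bar>Wt $ i $ j / f i - W $ i $ j\<bar> \<le> \<epsilon>"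
    and G_close: "\<And>i j. norm (block Gt i j - block G i j) \<le> \<eta>"
    and W_nonneg: "\<And>i j. 0 \<le> W $ i $ j" and W_le: "\<And>i j. W $ i $ j \<le> C"
    and G_le: "\<And>i j. norm (block G i j) \<le> C" and Gt_le: "\<And>i j. norm (block Gt i j) \<le> C"
    and deg_gt: "\<And>i. real CARD('n) * \<gamma> < deg W i"
  shows "opnorm (L0mat W G - L0mat Wt Gt) \<le> 1 / \<gamma> * C * (\<eta> + \<epsilon>) + \<epsilon> / (\<gamma> * (\<gamma> - \<epsilon>)) * C\<^sup>2"
proof -
  define w where "w i j = offdiag W $ i $ j" for i j
  define a where "a i j = offdiag Wt $ i $ j / f i" for i j
  have row: "row_perturbation UNIV (w i) (a i) (block G i) (block Gt i) C \<epsilon> \<eta> \<gamma>" for i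
    using W_nonneg W_le W_close G_close G_le Gt_le eps_nonneg eps_less deg_gt[of i]
      order_trans[OF W_nonneg W_le]
    by unfold_locales (auto simp: w_def a_def offdiag_def deg_eq_sum_offdiag)
  have deg_W: "deg W i = sum (w i) UNIV" and deg_Wt: "deg Wt i = f i * sum (a i) UNIV" for i
    using f_pos[of i] by (simp_all add: w_def a_def deg_eq_sum_offdiag sum_distrib_left)
  have deg_W_nz: "deg W i \<noteq> 0" and deg_Wt_nz: "deg Wt i \<noteq> 0" for i
    using row_perturbation.D_pos[OF row, of i] row_perturbation.A_pos[OF row, of i] f_pos[of i]
    by (simp_all add: deg_W deg_Wt)
  have "block (L0mat W G - L0mat Wt Gt) i j
          = (w i j / sum (w i) UNIV) *\<^sub>R block G i j - (a i j / sum (a i) UNIV) *\<^sub>R block Gt i j" for i j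
    using f_pos[of i]
    by (simp add: block_diff block_L0mat[OF deg_W_nz] block_L0mat[OF deg_Wt_nz] deg_W deg_Wt)
       (simp add: a_def w_def)
  then have "L2_set (\<lambda>j. norm (block (L0mat W G - L0mat Wt Gt) i j)) UNIV
      \<le> (1 / \<gamma> * C * (\<eta> + \<epsilon>) + \<epsilon> / (\<gamma> * (\<gamma> - \<epsilon>)) * C\<^sup>2) / sqrt CARD('n)" for i
    using row_perturbation.L2_set_row_error_le[OF row, of i] by simp
  then show ?thesis
    by (rule order_trans[OF opnorm_le_norm norm_le_of_block_rows])
qed

lemma opnorm_Lmat_sub_L0mat_le:
  fixes W :: "real^'n::finite^'n" and G :: "real^('n \<times> 'd::finite)^('n \<times> 'd)"
  assumes W_nonneg: "\<And>i j. 0 \<le> W $ i $ j" and W_le: "\<And>i j. W $ i $ j \<le> C"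
    and G_le: "\<And>i j. norm (block G i j) \<le> C"
    and gamma_pos: "0 < \<gamma>" and deg_gt: "\<And>i. real CARD('n) * \<gamma> < deg W i"
  shows "opnorm (Lmat W G - L0mat W G) \<le> C\<^sup>2 / (real CARD('n) * \<gamma>)"
proof (rule opnorm_block_diagonal_le)
  have deg_pos: "0 < deg W i" for i
    using deg_gt[of i] gamma_pos by (smt (verit) of_nat_0_le_iff mult_nonneg_nonneg)
  then have deg_nz: "deg W i \<noteq> 0" for i
    by (metis less_irrefl)
  show "block (Lmat W G - L0mat W G) i j = 0" if "i \<noteq> j" for i j
    using that by (simp add: block_diff block_Lmat[OF deg_nz] block_L0mat[OF deg_nz] offdiag_def)
  fix i
  have "norm (block (Lmat W G - L0mat W G) i i) = W $ i $ i / deg W i * norm (block G i i)"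
    using W_nonneg[of i i] deg_pos[of i]
    by (simp add: block_diff block_Lmat[OF deg_nz] block_L0mat[OF deg_nz] offdiag_def)
  also have "\<dots> \<le> C / (real CARD('n) * \<gamma>) * C"
    using W_nonneg W_le G_le less_imp_le[OF deg_gt] gamma_pos deg_pos order_trans[OF W_nonneg W_le]
    by (intro mult_mono frac_le) auto
  finally show "norm (block (Lmat W G - L0mat W G) i i) \<le> C\<^sup>2 / (real CARD('n) * \<gamma>)"
    by (simp add: power2_eq_square)
qed

theorem lemma2p3:
  fixes W Wt :: "real^'n::finite^'n"
    and G Gt :: "real^('n \<times> 'd::finite)^('n \<times> 'd)"
    and f :: "'n \<Rightarrow> real"
    and \<epsilon> \<eta> C \<gamma> :: real
  assumes f_pos: "\<forall>i. f i > 0"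
    and eps_nonneg: "\<epsilon> \<ge> 0" and eta_nonneg: "\<eta> \<ge> 0"
    and W_close: "\<forall>i j. i \<noteq> j \<longrightarrow> \<bar>Wt $ i $ j / f i - W $ i $ j\<bar> \<le> \<epsilon>"
    and G_close: "\<forall>i j. norm (block Gt i j - block G i j) \<le> \<eta>"
    and C_pos: "C > 0"
    and W_bound: "\<forall>i j. 0 \<le> W $ i $ j \<and> W $ i $ j \<le> C"
    and G_bound: "\<forall>i j. norm (block G i j) \<le> C"
    and Gt_bound: "\<forall>i j. norm (block Gt i j) \<le> C"
    and deg: "(INF i. (1 / real CARD('n)) * (\<Sum>j\<in>UNIV - {i}. W $ i $ j)) > \<gamma>"
    and gamma_eps: "\<gamma> > \<epsilon>"
  shows "opnorm (L0mat W G - L0mat Wt Gt)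
           \<le> (1 / \<gamma>) * C * (\<eta> + \<epsilon>) + \<epsilon> / (\<gamma> * (\<gamma> - \<epsilon>)) * C^2
         \<and> opnorm (Lmat W G - L0mat Wt Gt)
           \<le> (1 / \<gamma>) * C * (\<eta> + \<epsilon>) + \<epsilon> / (\<gamma> * (\<gamma> - \<epsilon>)) * C^2
              + C^2 / (real CARD('n) * \<gamma>)"
proof -
  have deg_gt: "real CARD('n) * \<gamma> < deg W i" for i
    using less_cINF_D[OF bdd_below_finite deg, of i]
    by (simp add: deg_def field_simps)
  have L0_diff: "opnorm (L0mat W G - L0mat Wt Gt)
      \<le> 1 / \<gamma> * C * (\<eta> + \<epsilon>) + \<epsilon> / (\<gamma> * (\<gamma> - \<epsilon>)) * C\<^sup>2"
    by (rule opnorm_L0mat_diff_le[where f = f, OF _ eps_nonneg gamma_eps _ _ _ _ _ _ deg_gt])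
       (use f_pos W_close G_close W_bound G_bound Gt_bound in auto)
  have diagonal: "opnorm (Lmat W G - L0mat W G) \<le> C\<^sup>2 / (real CARD('n) * \<gamma>)"
    by (rule opnorm_Lmat_sub_L0mat_le[OF _ _ _ _ deg_gt])
       (use W_bound G_bound eps_nonneg gamma_eps in auto)
  have "opnorm (Lmat W G - L0mat Wt Gt)
      \<le> opnorm (Lmat W G - L0mat W G) + opnorm (L0mat W G - L0mat Wt Gt)"
    using opnorm_add_le[of "Lmat W G - L0mat W G" "L0mat W G - L0mat Wt Gt"] by simp
  with L0_diff diagonal show ?thesis
    by simp
qed

end
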